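(* Let $p,q,r\in(0,1)$ with $p+q+r=1$. Let $X_1,\eta_2,\eta_3,\ldots$ be independent random variables, each taking the values $1,-1,0$ with probabilities $p,q,r$ respectively. Set $X_{n+1}=\eta_{n+1}X_1$ for $n\ge1$ and $S_n=\sum_{k=1}^nX_k$. Then, as $n\to\infty$: (a) $\dfrac{S_n-n(p-q)X_1}{\sqrt{n\,(p+q-(p-q)^2)}}$ converges in distribution to the law with distribution function $F(x)=(p+q)\Phi(x)+r\,\mathbf 1\{x\ge0\}$, where $\Phi$ is the standard normal distribution function; (b) $\dfrac{S_n-n(p-q)X_1}{n}\to0$ almost surely.
   Context: This is the elephant random walk with delays in which the elephant remembers only the first step. The limit in (a) is the mixture $(p+q)\mathcal N_{0,1}+r\delta_0$ of a standard normal law and a point mass at $0$. *)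

theory Defs
  imports "HOL-Probability.Probability"
begin

end

theory Submission
  imports Defs "HOL-Real_Asymp.Real_Asymp"
begin

(* Let \<mu> = p - q and \<sigma>\<^sup>2 = p + q - \<mu>\<^sup>2 be the mean and variance of the steps.
   Since X k = eta k * X1 for k \<ge> 2, we have S n - n \<mu> X1 = X1 * W n with
   W n = (\<Sum>k=2..n. eta k - \<mu>) + (1 - \<mu>), and X1 is independent of W n. Splitting according to
   X1 \<in> {1, -1, 0}, the law of the normalised quantity is p times the law of W n / sqrt (n \<sigma>\<^sup>2),
   plus q times the law of its negative, plus r \<delta>\<^sub>0. The central limit theorem, applied to the
   eta k and to the - eta k, sends both laws to N(0,1); the shift 1 - \<mu> and the normalisation
   by n instead of n - 1 do not matter in the limit. For (b), the centred eta k are bounded, so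
   Hoeffding's inequality and Borel-Cantelli give W n / n \<longlonglongrightarrow> 0 almost surely. *)

lemma (in prob_space) indep_sets_reindex:
  assumes ind: "indep_sets F I" and inj: "inj_on g J" and sub: "g ` J \<subseteq> I"
  shows "indep_sets (\<lambda>j. F (g j)) J"
  unfolding indep_sets_def
proof (intro conjI ballI allI impI)
  fix j assume "j \<in> J"
  then show "F (g j) \<subseteq> events" using ind sub by (auto simp: indep_sets_def)
next
  fix K A assume K: "K \<subseteq> J" "K \<noteq> {}" "finite K" and A: "A \<in> Pi K (\<lambda>j. F (g j))"
  define B where "B i = A (the_inv_into K g i)" for i
  have injK: "inj_on g K" using inj K(1) by (rule inj_on_subset)
  have Bg: "B (g k) = A k" if "k \<in> K" for k
    using that injK by (simp add: B_def the_inv_into_f_f)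
  have "prob (\<Inter>i\<in>g ` K. B i) = (\<Prod>i\<in>g ` K. prob (B i))"
    by (rule indep_setsD[OF ind]) (use K sub A Bg in auto)
  moreover have "(\<Inter>i\<in>g ` K. B i) = (\<Inter>k\<in>K. A k)" using Bg by auto
  moreover have "(\<Prod>i\<in>g ` K. prob (B i)) = (\<Prod>k\<in>K. prob (A k))"
    using injK Bg by (simp add: prod.reindex)
  ultimately show "prob (\<Inter>j\<in>K. A j) = (\<Prod>j\<in>K. prob (A j))" by simp
qed

lemma (in prob_space) indep_vars_reindex:
  assumes ind: "indep_vars M' X I" and inj: "inj_on g J" and sub: "g ` J \<subseteq> I"
  shows "indep_vars (\<lambda>j. M' (g j)) (\<lambda>j. X (g j)) J"
  using ind sub indep_sets_reindex[OF _ inj sub,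
      where F="\<lambda>i. sigma_sets (space M) {X i -` A \<inter> space M | A. A \<in> sets (M' i)}"]
  unfolding indep_vars_def by auto

definition three_point_rv :: "'a measure \<Rightarrow> real \<Rightarrow> real \<Rightarrow> real \<Rightarrow> ('a \<Rightarrow> real) \<Rightarrow> bool" where
  "three_point_rv M p q r V \<longleftrightarrow> V \<in> borel_measurable M \<and> p + q + r = 1 \<and>
     measure M {\<omega> \<in> space M. V \<omega> = 1} = p \<and> measure M {\<omega> \<in> space M. V \<omega> = -1} = q \<and>
     measure M {\<omega> \<in> space M. V \<omega> = 0} = r"

lemma three_point_rv_measurable: "three_point_rv M p q r V \<Longrightarrow> V \<in> borel_measurable M"
  by (simp add: three_point_rv_def)

lemma three_point_rv_uminus: "three_point_rv M p q r V \<Longrightarrow> three_point_rv M q p r (\<lambda>\<omega>. - V \<omega>)"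
  by (auto simp: three_point_rv_def minus_equation_iff eq_commute[of "-1"])

lemma (in prob_space) three_point_rv_AE:
  assumes "three_point_rv M p q r V"
  shows "AE \<omega> in M. V \<omega> \<in> {1, -1, 0}"
proof -
  have [measurable]: "V \<in> borel_measurable M" using assms by (rule three_point_rv_measurable)
  have "prob ({\<omega>\<in>space M. V \<omega> = 1} \<union> ({\<omega>\<in>space M. V \<omega> = -1} \<union> {\<omega>\<in>space M. V \<omega> = 0})) = 1"
    using assms
    by (subst finite_measure_Union; (subst finite_measure_Union)?) (auto simp: three_point_rv_def)
  then have "AE \<omega> in M. \<omega> \<in> {\<omega>\<in>space M. V \<omega> = 1} \<union> ({\<omega>\<in>space M. V \<omega> = -1} \<union> {\<omega>\<in>space M. V \<omega> = 0})"
    by (rule AE_prob_1)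
  then show ?thesis by auto
qed

lemma (in prob_space) three_point_rv_integral:
  fixes f :: "real \<Rightarrow> real"
  assumes V: "three_point_rv M p q r V" and [measurable]: "f \<in> borel_measurable borel"
  shows "integrable M (\<lambda>\<omega>. f (V \<omega>))"
    and "expectation (\<lambda>\<omega>. f (V \<omega>)) = p * f 1 + q * f (-1) + r * f 0"
proof -
  have [measurable]: "V \<in> borel_measurable M" using V by (rule three_point_rv_measurable)
  define I :: "real \<Rightarrow> 'a \<Rightarrow> real" where "I c = indicator {\<omega>\<in>space M. V \<omega> = c}" for c
  define g where "g \<omega> = f 1 * I 1 \<omega> + f (-1) * I (-1) \<omega> + f 0 * I 0 \<omega>" for \<omega>
  have I: "integrable M (I c)" for c
    unfolding I_def by (intro integrable_real_indicator) (auto simp: emeasure_eq_measure)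
  have g: "AE \<omega> in M. f (V \<omega>) = g \<omega>"
    using three_point_rv_AE[OF V] AE_space by eventually_elim (auto simp: g_def I_def)
  have g_int: "integrable M g"
    unfolding g_def using I by (intro Bochner_Integration.integrable_add integrable_mult_right)
  then show "integrable M (\<lambda>\<omega>. f (V \<omega>))"
    using g by (subst integrable_cong_AE) auto
  have "expectation (I c) = prob {\<omega>\<in>space M. V \<omega> = c}" for c
    by (simp add: I_def Int_absorb2)
  then have "expectation g = p * f 1 + q * f (-1) + r * f 0"
    using I V unfolding g_def three_point_rv_def by simp
  then show "expectation (\<lambda>\<omega>. f (V \<omega>)) = p * f 1 + q * f (-1) + r * f 0"
    using g g_int by (subst integral_cong_AE[where g=g]) auto
qed

lemma (in prob_space) three_point_rv_distr_eq:
  assumes "three_point_rv M p q r V" "three_point_rv M p q r V'"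
  shows "distr M borel V = distr M borel V'"
proof (rule measure_eqI)
  fix A :: "real set" assume "A \<in> sets (distr M borel V)"
  then have [measurable]: "A \<in> sets borel" by simp
  have law: "prob (W -` A \<inter> space M) = p * indicator A 1 + q * indicator A (-1) + r * indicator A 0"
    if W: "three_point_rv M p q r W" for W
  proof -
    have [measurable]: "W \<in> borel_measurable M" using W by (rule three_point_rv_measurable)
    have "prob (W -` A \<inter> space M) = expectation (\<lambda>\<omega>. indicator A (W \<omega>))"
      by (simp flip: indicator_vimage)
    also have "\<dots> = p * indicator A 1 + q * indicator A (-1) + r * indicator A 0"
      by (rule three_point_rv_integral(2)[OF W]) simp
    finally show ?thesis .
  qed
  show "emeasure (distr M borel V) A = emeasure (distr M borel V') A"
    using assms by (simp add: emeasure_distr emeasure_eq_measure three_point_rv_measurable law)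
qed simp

lemma (in prob_space) three_point_rv_expectation:
  "three_point_rv M p q r V \<Longrightarrow> expectation V = p - q"
  using three_point_rv_integral(2)[of p q r V "\<lambda>v. v"] by simp

lemma (in prob_space) three_point_rv_variance:
  assumes V: "three_point_rv M p q r V"
  shows "variance V = p + q - (p - q)\<^sup>2"
proof -
  have "variance V = p * (1 - (p - q))\<^sup>2 + q * (-1 - (p - q))\<^sup>2 + r * (0 - (p - q))\<^sup>2"
    using three_point_rv_integral(2)[OF V, of "\<lambda>v. (v - (p - q))\<^sup>2"]
    by (simp add: three_point_rv_expectation[OF V])
  also have "\<dots> = p + q - 2 * (p - q)\<^sup>2 + (p + q + r) * (p - q)\<^sup>2"
    by (simp add: power2_eq_square algebra_simps)
  also have "\<dots> = p + q - (p - q)\<^sup>2"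
    using V by (simp add: three_point_rv_def)
  finally show ?thesis .
qed

lemma three_point_variance_pos:
  fixes p q :: real
  assumes "0 < p" "0 < q" "p + q \<le> 1"
  shows "p + q - (p - q)\<^sup>2 > 0"
proof -
  have "(p - q)\<^sup>2 < (p + q)\<^sup>2" using assms by (simp add: power2_eq_square algebra_simps)
  also have "\<dots> \<le> p + q" using assms by (simp add: power2_eq_square mult_le_cancel_left1)
  finally show ?thesis by simp
qed

lemma (in prob_space) prob_three_point_times_le:
  assumes X: "three_point_rv M p q r X" and ind: "indep_var borel X borel W"
  shows "prob {\<omega>\<in>space M. X \<omega> * W \<omega> \<le> x} =
    p * prob {\<omega>\<in>space M. W \<omega> \<le> x} + q * prob {\<omega>\<in>space M. - W \<omega> \<le> x} + r * indicator {0..} x"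
proof -
  have [measurable]: "X \<in> borel_measurable M" "W \<in> borel_measurable M"
    using indep_var_rv1[OF ind] indep_var_rv2[OF ind] by simp_all
  let ?B1 = "{\<omega>\<in>space M. X \<omega> \<in> {1} \<and> W \<omega> \<in> {..x}}"
  let ?B2 = "{\<omega>\<in>space M. X \<omega> \<in> {-1} \<and> W \<omega> \<in> {-x..}}"
  let ?B3 = "{\<omega>\<in>space M. X \<omega> = 0 \<and> 0 \<le> x}"
  have "prob {\<omega>\<in>space M. X \<omega> * W \<omega> \<le> x} = prob (?B1 \<union> ?B2 \<union> ?B3)"
    by (rule measure_eq_AE) (use three_point_rv_AE[OF X] in \<open>auto elim!: AE_mp\<close>)
  also have "\<dots> = prob ?B1 + prob ?B2 + prob ?B3"
    by (subst finite_measure_Union; (subst finite_measure_Union)?) auto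
  also have "prob ?B1 = p * prob {\<omega>\<in>space M. W \<omega> \<le> x}"
    using prob_indep_random_variable[OF ind, of "{1}" "{..x}"] X
    by (simp add: three_point_rv_def)
  also have "prob ?B2 = q * prob {\<omega>\<in>space M. - W \<omega> \<le> x}"
    using prob_indep_random_variable[OF ind, of "{-1}" "{-x..}"] X
    by (simp add: three_point_rv_def minus_le_iff)
  also have "prob ?B3 = r * indicator {0..} x"
    using X by (simp add: three_point_rv_def indicator_def)
  finally show ?thesis .
qed

lemma tendsto_mono_funs_at_tendsto:
  fixes F :: "nat \<Rightarrow> real \<Rightarrow> real"
  assumes conv: "\<And>z. (\<lambda>m. F m z) \<longlonglongrightarrow> G z" and cont: "isCont G x"
    and mono: "\<And>m. mono (F m)" and y: "y \<longlonglongrightarrow> x"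
  shows "(\<lambda>m. F m (y m)) \<longlonglongrightarrow> G x"
  unfolding tendsto_iff
proof (intro allI impI)
  fix e :: real assume e: "e > 0"
  obtain d where d: "d > 0" and dG: "\<And>z. z \<noteq> x \<Longrightarrow> \<bar>z - x\<bar> < d \<Longrightarrow> \<bar>G z - G x\<bar> < e/2"
    using cont e unfolding isCont_def LIM_eq by (metis real_norm_def half_gt_zero)
  have G: "\<bar>G (x - d/2) - G x\<bar> < e/2" "\<bar>G (x + d/2) - G x\<bar> < e/2"
    using dG[of "x - d/2"] dG[of "x + d/2"] d by auto
  have "\<forall>\<^sub>F m in sequentially. \<bar>F m (x - d/2) - G (x - d/2)\<bar> < e/2"
    "\<forall>\<^sub>F m in sequentially. \<bar>F m (x + d/2) - G (x + d/2)\<bar> < e/2"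
    "\<forall>\<^sub>F m in sequentially. \<bar>y m - x\<bar> < d/2"
    using tendstoD[OF conv, of "e/2"] tendstoD[OF y, of "d/2"] e d by (auto simp: dist_real_def)
  then show "\<forall>\<^sub>F m in sequentially. dist (F m (y m)) (G x) < e"
  proof eventually_elim
    case (elim m)
    from elim(3) have "x - d/2 \<le> y m" "y m \<le> x + d/2" by (simp_all only: abs_less_iff, linarith+)
    then have "F m (x - d/2) \<le> F m (y m)" "F m (y m) \<le> F m (x + d/2)"
      by (auto intro!: monoD[OF mono])
    with elim G show ?case by (simp only: dist_real_def abs_less_iff) linarith
  qed
qed

lemma isCont_std_normal_cdf: "isCont (cdf std_normal_distribution) x"
proof -
  interpret real_distribution std_normal_distribution by (rule real_dist_normal_dist)
  have "AE y in lborel. y \<in> {x} \<longrightarrow> ennreal (std_normal_density y) = 0"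
    using AE_lborel_singleton[of x] by eventually_elim auto
  then have "{x} \<in> null_sets std_normal_distribution"
    by (subst null_sets_density_iff) auto
  then show ?thesis by (simp add: isCont_cdf measure_def null_setsD1)
qed

lemma tendsto_threshold_rescale:
  fixes s :: real assumes s: "s > 0"
  shows "(\<lambda>m. (x * sqrt (real (Suc m) * s) - c) / sqrt (real m * s)) \<longlonglongrightarrow> x"
proof -
  have "(\<lambda>m. x * (sqrt (real (Suc m)) / sqrt (real m)) - c / sqrt s * (1 / sqrt (real m)))
      \<longlonglongrightarrow> x * 1 - c / sqrt s * 0"
    by (intro tendsto_intros) real_asymp+
  moreover have "\<forall>\<^sub>F m in sequentially. x * (sqrt (real (Suc m)) / sqrt (real m)) - c / sqrt s * (1 / sqrt (real m))
      = (x * sqrt (real (Suc m) * s) - c) / sqrt (real m * s)"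
    using eventually_gt_at_top[of "0::nat"]
    by eventually_elim (simp only: real_sqrt_mult, use s in \<open>simp add: field_simps\<close>)
  ultimately show ?thesis by (simp add: Lim_transform_eventually)
qed

lemma (in prob_space) central_limit_theorem_shifted:
  fixes X :: "nat \<Rightarrow> 'a \<Rightarrow> real"
  assumes indep: "indep_vars (\<lambda>_. borel) X UNIV" and mean: "\<And>n. expectation (X n) = \<mu>"
    and \<sigma>: "\<sigma> > 0" and square_integrable: "\<And>n. integrable M (\<lambda>\<omega>. (X n \<omega>)\<^sup>2)"
    and var: "\<And>n. variance (X n) = \<sigma>\<^sup>2" and distrib: "\<And>n. distr M borel (X n) = \<nu>"
  shows "(\<lambda>m. prob {\<omega>\<in>space M. ((\<Sum>i<m. X i \<omega> - \<mu>) + c) / sqrt (real (Suc m) * \<sigma>\<^sup>2) \<le> x})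
    \<longlonglongrightarrow> cdf std_normal_distribution x"
proof -
  have [measurable]: "X n \<in> borel_measurable M" for n
    using indep unfolding indep_vars_def by auto
  define T where "T m \<omega> = (\<Sum>i<m. X i \<omega> - \<mu>) / sqrt (real m * \<sigma>\<^sup>2)" for m \<omega>
  have [measurable]: "T m \<in> borel_measurable M" for m unfolding T_def by measurable
  define F where "F m z = prob {\<omega>\<in>space M. T m \<omega> \<le> z}" for m z
  have conv: "(\<lambda>m. F m z) \<longlonglongrightarrow> cdf std_normal_distribution z" for z
  proof -
    have "(\<lambda>m. cdf (distr M borel (T m)) z) \<longlonglongrightarrow> cdf std_normal_distribution z"
      using central_limit_theorem[OF indep mean \<sigma> square_integrable var distrib] isCont_std_normal_cdf
      unfolding weak_conv_m_def weak_conv_def T_def by blast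
    moreover have "cdf (distr M borel (T m)) z = F m z" for m
      unfolding cdf_def F_def by (subst measure_distr) (auto intro!: arg_cong[where f=prob])
    ultimately show ?thesis by simp
  qed
  have mono: "mono (F m)" for m
    unfolding F_def by (intro monoI finite_measure_mono) auto
  \<comment> \<open>The event in question is {T m \<le> y m}, and y m tends to the continuity point x of \<Phi>.\<close>
  define y where "y m = (x * sqrt (real (Suc m) * \<sigma>\<^sup>2) - c) / sqrt (real m * \<sigma>\<^sup>2)" for m
  have "y \<longlonglongrightarrow> x"
    unfolding y_def using \<sigma> by (intro tendsto_threshold_rescale) simp
  then have "(\<lambda>m. F m (y m)) \<longlonglongrightarrow> cdf std_normal_distribution x"
    by (rule tendsto_mono_funs_at_tendsto[OF conv isCont_std_normal_cdf mono])
  moreover have "\<forall>\<^sub>F m in sequentially. F m (y m) =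
      prob {\<omega>\<in>space M. ((\<Sum>i<m. X i \<omega> - \<mu>) + c) / sqrt (real (Suc m) * \<sigma>\<^sup>2) \<le> x}"
    using eventually_gt_at_top[of "0::nat"]
  proof eventually_elim
    case (elim m)
    then have "sqrt (real (Suc m) * \<sigma>\<^sup>2) > 0" "sqrt (real m * \<sigma>\<^sup>2) > 0" using \<sigma> by auto
    then have "(t + c) / sqrt (real (Suc m) * \<sigma>\<^sup>2) \<le> x \<longleftrightarrow> t / sqrt (real m * \<sigma>\<^sup>2) \<le> y m" for t
      unfolding y_def by (simp add: pos_divide_le_eq divide_le_cancel le_diff_eq)
    then show ?case unfolding F_def T_def by simp
  qed
  ultimately show ?thesis by (rule Lim_transform_eventually)
qed

lemma (in prob_space) three_point_central_limit:
  assumes indep: "indep_vars (\<lambda>_. borel) V UNIV" and V: "\<And>i. three_point_rv M p q r (V i)"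
    and "0 < p" "0 < q"
  shows "(\<lambda>m. prob {\<omega>\<in>space M. ((\<Sum>i<m. V i \<omega> - (p - q)) + c) / sqrt (real (Suc m) * (p + q - (p - q)\<^sup>2)) \<le> x})
    \<longlonglongrightarrow> cdf std_normal_distribution x"
proof -
  have "0 \<le> r" using V[of 0] unfolding three_point_rv_def by auto
  then have pos: "p + q - (p - q)\<^sup>2 > 0"
    using V[of 0] \<open>0 < p\<close> \<open>0 < q\<close> by (intro three_point_variance_pos) (auto simp: three_point_rv_def)
  have "integrable M (\<lambda>\<omega>. (V i \<omega>)\<^sup>2)" for i
    using three_point_rv_integral(1)[OF V, of "\<lambda>v. v\<^sup>2"] by simp
  then show ?thesis
    using central_limit_theorem_shifted[OF indep three_point_rv_expectation[OF V], of "sqrt (p + q - (p - q)\<^sup>2)"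
        "distr M borel (V 0)" c x] pos
    by (simp add: three_point_rv_variance[OF V] three_point_rv_distr_eq[OF V V])
qed

lemma (in prob_space) AE_eventually_abs_sum_less:
  fixes Z :: "nat \<Rightarrow> 'a \<Rightarrow> real"
  assumes indep: "indep_vars (\<lambda>_. borel) Z UNIV" and bounded: "\<And>i. AE \<omega> in M. \<bar>Z i \<omega>\<bar> \<le> B"
    and mean: "\<And>i. expectation (Z i) = 0" and e: "e > 0"
  shows "AE \<omega> in M. \<forall>\<^sub>F m in sequentially. \<bar>\<Sum>i<m. Z i \<omega>\<bar> < e * real m"
proof -
  have [measurable]: "Z i \<in> borel_measurable M" for i
    using indep unfolding indep_vars_def by auto
  \<comment> \<open>Hoeffding's inequality needs a nondegenerate interval.\<close>
  define C where "C = \<bar>B\<bar> + 1"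
  have C: "C > 0" by (simp add: C_def)
  define A where "A m = {\<omega>\<in>space M. e * real m \<le> \<bar>\<Sum>i<m. Z i \<omega>\<bar>}" for m
  have [measurable]: "A m \<in> sets M" for m unfolding A_def by measurable
  have Hoeffding: "prob (A m) \<le> 2 * exp (- (e\<^sup>2 / (2 * C\<^sup>2))) ^ m" for m
  proof (cases "m = 0")
    case False
    interpret Hoeffding_ineq M "{..<m}" Z "\<lambda>_. - C" "\<lambda>_. C" 0
    proof unfold_locales
      show "indep_vars (\<lambda>_. borel) Z {..<m}" by (rule indep_vars_subset[OF indep]) auto
      show "AE \<omega> in M. Z i \<omega> \<in> {- C..C}" for i
        using bounded[of i] by eventually_elim (auto simp: C_def)
      show "0 \<equiv> \<Sum>i<m. expectation (Z i)" by (simp add: mean)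
    qed simp
    have "prob (A m) \<le> 2 * exp (-2 * (e * real m)\<^sup>2 / (\<Sum>i<m. (C - - C)\<^sup>2))"
      using Hoeffding_ineq_abs_ge[of "e * real m"] False e C by (simp add: A_def)
    also have "-2 * (e * real m)\<^sup>2 / (\<Sum>i<m. (C - - C)\<^sup>2) = real m * (- (e\<^sup>2 / (2 * C\<^sup>2)))"
      using False C by (simp add: power2_eq_square field_simps)
    also have "exp (real m * (- (e\<^sup>2 / (2 * C\<^sup>2)))) = exp (- (e\<^sup>2 / (2 * C\<^sup>2))) ^ m"
      by (rule exp_of_nat_mult)
    finally show ?thesis .
  next
    case True
    have "prob (A m) \<le> 1" by (rule prob_le_1)
    also have "1 \<le> 2 * exp (- (e\<^sup>2 / (2 * C\<^sup>2))) ^ m" using True by simp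
    finally show ?thesis .
  qed
  have "summable (\<lambda>m. 2 * exp (- (e\<^sup>2 / (2 * C\<^sup>2))) ^ m)"
    using e C by (intro summable_mult summable_geometric) simp
  then have "summable (\<lambda>m. prob (A m))"
    by (rule summable_comparison_test'[where N=0]) (simp add: Hoeffding)
  then have "AE \<omega> in M. \<forall>\<^sub>F m in sequentially. \<omega> \<in> space M - A m"
    by (intro borel_cantelli_AE1) (auto simp: emeasure_eq_measure)
  then show ?thesis
    by (rule AE_mp) (auto intro!: AE_I2 elim!: eventually_mono simp: A_def not_le)
qed

lemma (in prob_space) strong_law_bounded:
  fixes Z :: "nat \<Rightarrow> 'a \<Rightarrow> real"
  assumes indep: "indep_vars (\<lambda>_. borel) Z UNIV" and bounded: "\<And>i. AE \<omega> in M. \<bar>Z i \<omega>\<bar> \<le> B"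
    and mean: "\<And>i. expectation (Z i) = 0"
  shows "AE \<omega> in M. (\<lambda>m. (\<Sum>i<m. Z i \<omega>) / real m) \<longlonglongrightarrow> 0"
proof -
  have "AE \<omega> in M. \<forall>j. \<forall>\<^sub>F m in sequentially. \<bar>\<Sum>i<m. Z i \<omega>\<bar> < 1 / real (Suc j) * real m"
    unfolding AE_all_countable by (intro allI AE_eventually_abs_sum_less[OF indep bounded mean]) simp
  then show ?thesis
  proof eventually_elim
    case (elim \<omega>)
    show ?case unfolding tendsto_iff
    proof (intro allI impI)
      fix \<epsilon> :: real assume "\<epsilon> > 0"
      then obtain j where j: "1 / real (Suc j) < \<epsilon>"
        by (metis inverse_eq_divide reals_Archimedean)
      from elim[rule_format, of j] show "\<forall>\<^sub>F m in sequentially. dist ((\<Sum>i<m. Z i \<omega>) / real m) 0 < \<epsilon>"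
      proof eventually_elim
        case (elim m)
        then have "m > 0" by (cases m) auto
        with elim have "\<bar>\<Sum>i<m. Z i \<omega>\<bar> / real m < 1 / real (Suc j)"
          by (simp add: divide_less_eq)
        with j show ?case by simp
      qed
    qed
  qed
qed

lemma (in prob_space) three_point_strong_law:
  assumes indep: "indep_vars (\<lambda>_. borel) V UNIV" and V: "\<And>i. three_point_rv M p q r (V i)"
  shows "AE \<omega> in M. (\<lambda>m. (\<Sum>i<m. V i \<omega> - (p - q)) / real m) \<longlonglongrightarrow> 0"
proof (rule strong_law_bounded)
  show "indep_vars (\<lambda>_. borel) (\<lambda>i \<omega>. V i \<omega> - (p - q)) UNIV"
    by (rule indep_vars_compose2[OF indep]) auto
  show "AE \<omega> in M. \<bar>V i \<omega> - (p - q)\<bar> \<le> 1 + \<bar>p - q\<bar>" for i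
    using three_point_rv_AE[OF V[of i]] by eventually_elim auto
  show "expectation (\<lambda>\<omega>. V i \<omega> - (p - q)) = 0" for i
  proof -
    have "expectation (\<lambda>\<omega>. V i \<omega> - (p - q)) = p * (1 - (p - q)) + q * (-1 - (p - q)) + r * (0 - (p - q))"
      by (rule three_point_rv_integral(2)[OF V]) simp
    also have "\<dots> = (p - q) * (1 - (p + q + r))" by (simp add: algebra_simps)
    also have "\<dots> = 0" using V[of i] by (simp add: three_point_rv_def)
    finally show ?thesis .
  qed
qed

lemma (in prob_space) first_step_memory_cdf_tendsto:
  fixes X :: "'a \<Rightarrow> real" and V :: "nat \<Rightarrow> 'a \<Rightarrow> real"
  assumes indep: "indep_vars (\<lambda>_. borel) (case_nat X V) UNIV"
    and X: "three_point_rv M p q r X" and V: "\<And>i. three_point_rv M p q r (V i)"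
    and p: "0 < p" and q: "0 < q"
  shows "(\<lambda>m. cdf (distr M borel (\<lambda>\<omega>.
      X \<omega> * ((\<Sum>i<m. V i \<omega> - (p - q)) + (1 - (p - q))) / sqrt (real (Suc m) * (p + q - (p - q)\<^sup>2)))) x)
    \<longlonglongrightarrow> (p + q) * cdf std_normal_distribution x + r * indicator {0..} x"
proof -
  define W where "W m \<omega> = ((\<Sum>i<m. V i \<omega> - (p - q)) + (1 - (p - q))) / sqrt (real (Suc m) * (p + q - (p - q)\<^sup>2))"
    for m \<omega>
  have [measurable]: "X \<in> borel_measurable M" "V i \<in> borel_measurable M" for i
    using X V[of i] by (simp_all add: three_point_rv_measurable)
  have cdf_eq: "cdf (distr M borel (\<lambda>\<omega>.
      X \<omega> * ((\<Sum>i<m. V i \<omega> - (p - q)) + (1 - (p - q))) / sqrt (real (Suc m) * (p + q - (p - q)\<^sup>2)))) x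
    = prob {\<omega>\<in>space M. X \<omega> * W m \<omega> \<le> x}" for m
    unfolding cdf_def W_def by (subst measure_distr) (auto intro!: arg_cong[where f=prob])
  have indV: "indep_vars (\<lambda>_. borel) V UNIV"
    using indep_vars_reindex[OF indep, of Suc UNIV] by simp
  have "indep_var borel X borel (W m)" for m
  proof -
    have "indep_var borel (case_nat X V 0) borel (\<lambda>\<omega>. \<Sum>i\<in>Suc ` {..<m}. case_nat X V i \<omega>)"
      by (rule indep_vars_sum[OF _ _ indep_vars_subset[OF indep]]) auto
    then have "indep_var borel X borel (\<lambda>\<omega>. \<Sum>i<m. V i \<omega>)"
      by (simp add: sum.reindex)
    then have "indep_var borel (id \<circ> X) borel ((\<lambda>s. (s - real m * (p - q) + (1 - (p - q))) /
        sqrt (real (Suc m) * (p + q - (p - q)\<^sup>2))) \<circ> (\<lambda>\<omega>. \<Sum>i<m. V i \<omega>))"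
      by (rule indep_var_compose) auto
    then show ?thesis by (simp add: W_def[abs_def] comp_def sum_subtractf)
  qed
  then have mixture: "prob {\<omega>\<in>space M. X \<omega> * W m \<omega> \<le> x} =
      p * prob {\<omega>\<in>space M. W m \<omega> \<le> x} + q * prob {\<omega>\<in>space M. - W m \<omega> \<le> x} + r * indicator {0..} x" for m
    by (rule prob_three_point_times_le[OF X])
  have "(\<lambda>m. prob {\<omega>\<in>space M. W m \<omega> \<le> x}) \<longlonglongrightarrow> cdf std_normal_distribution x"
    unfolding W_def by (rule three_point_central_limit[OF indV V p q])
  moreover have "(\<lambda>m. prob {\<omega>\<in>space M. - W m \<omega> \<le> x}) \<longlonglongrightarrow> cdf std_normal_distribution x"
  proof -
    \<comment> \<open>- W m is the same statistic for the steps - V i, whose law has p and q swapped.\<close>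
    have "indep_vars (\<lambda>_. borel) (\<lambda>i \<omega>. - V i \<omega>) UNIV"
      by (rule indep_vars_compose2[OF indV]) auto
    from three_point_central_limit[OF this three_point_rv_uminus[OF V] q p, of "- (1 - (p - q))" x]
    moreover have "((\<Sum>i<m. - V i \<omega> - (q - p)) + - (1 - (p - q))) / sqrt (real (Suc m) * (q + p - (q - p)\<^sup>2))
        = - W m \<omega>" for m \<omega>
    proof -
      have "(\<Sum>i<m. - V i \<omega> - (q - p)) = - (\<Sum>i<m. V i \<omega> - (p - q))"
        by (simp add: sum_negf[symmetric] algebra_simps)
      moreover have "(q - p)\<^sup>2 = (p - q)\<^sup>2" by (rule power2_commute)
      ultimately show ?thesis by (simp add: W_def add.commute minus_divide_left)
    qed
    ultimately show ?thesis by simp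
  qed
  ultimately have "(\<lambda>m. prob {\<omega>\<in>space M. X \<omega> * W m \<omega> \<le> x})
      \<longlonglongrightarrow> p * cdf std_normal_distribution x + q * cdf std_normal_distribution x + r * indicator {0..} x"
    unfolding mixture by (intro tendsto_intros)
  then show ?thesis unfolding cdf_eq distrib_right .
qed

lemma (in prob_space) first_step_memory_AE_tendsto:
  fixes X :: "'a \<Rightarrow> real" and V :: "nat \<Rightarrow> 'a \<Rightarrow> real"
  assumes indep: "indep_vars (\<lambda>_. borel) V UNIV" and V: "\<And>i. three_point_rv M p q r (V i)"
  shows "AE \<omega> in M. (\<lambda>m. X \<omega> * ((\<Sum>i<m. V i \<omega> - (p - q)) + (1 - (p - q))) / real (Suc m)) \<longlonglongrightarrow> 0"
  using three_point_strong_law[OF indep V]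
proof eventually_elim
  case (elim \<omega>)
  define T where "T m = (\<Sum>i<m. V i \<omega> - (p - q))" for m
  have "T m / real (Suc m) = T m / real m * (real m / real (Suc m))" for m
    by (cases "m = 0") (simp add: T_def, simp)
  moreover have "(\<lambda>m. T m / real m * (real m / real (Suc m))) \<longlonglongrightarrow> 0 * 1"
    unfolding T_def by (intro tendsto_mult elim LIMSEQ_n_over_Suc_n)
  ultimately have "(\<lambda>m. T m / real (Suc m) + (1 - (p - q)) / real (Suc m)) \<longlonglongrightarrow> 0 + 0"
    by (intro tendsto_add LIMSEQ_Suc[OF lim_const_over_n]) simp_all
  then have "(\<lambda>m. (T m + (1 - (p - q))) / real (Suc m)) \<longlonglongrightarrow> 0"
    by (simp add: add_divide_distrib)
  then show ?case unfolding times_divide_eq_right[symmetric] T_def by (rule tendsto_mult_right_zero)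
qed

lemma sum_first_step_memory:
  fixes x :: real
  shows "(\<Sum>k\<in>{1..Suc m}. if k = 1 then x else y k * x) = x * (1 + (\<Sum>i<m. y (i + 2)))"
  by (induction m) (simp_all add: algebra_simps)

theorem theorem5p3:
  fixes M :: "'a measure"
    and p q r :: real
    and X1 :: "'a \<Rightarrow> real"
    and eta :: "nat \<Rightarrow> 'a \<Rightarrow> real"
    and Y X S :: "nat \<Rightarrow> 'a \<Rightarrow> real"
  assumes M: "prob_space M"
    and p: "0 < p" "p < 1" and q: "0 < q" "q < 1" and r: "0 < r" "r < 1"
    and pqr: "p + q + r = 1"
  defines "Y \<equiv> (\<lambda>k. if k = 1 then X1 else eta k)"
  assumes indep: "prob_space.indep_vars M (\<lambda>_. borel) Y {1..}"
    and distr1: "\<And>k. k \<ge> 1 \<Longrightarrow> measure M {\<omega> \<in> space M. Y k \<omega> = 1} = p"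
    and distrm1: "\<And>k. k \<ge> 1 \<Longrightarrow> measure M {\<omega> \<in> space M. Y k \<omega> = -1} = q"
    and distr0: "\<And>k. k \<ge> 1 \<Longrightarrow> measure M {\<omega> \<in> space M. Y k \<omega> = 0} = r"
  defines "X \<equiv> (\<lambda>k \<omega>. if k = 1 then X1 \<omega> else eta k \<omega> * X1 \<omega>)"
    and "S \<equiv> (\<lambda>n \<omega>. \<Sum>k\<in>{1..n}. X k \<omega>)"
  shows "weak_conv
           (\<lambda>n. cdf (distr M borel
              (\<lambda>\<omega>. (S n \<omega> - real n * (p - q) * X1 \<omega>) / sqrt (real n * (p + q - (p - q)\<^sup>2)))))
           (\<lambda>x. (p + q) * cdf std_normal_distribution x + r * indicator {0..} x)
       \<and> (AE \<omega> in M. (\<lambda>n. (S n \<omega> - real n * (p - q) * X1 \<omega>) / real n) \<longlonglongrightarrow> 0)"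
proof -
  interpret prob_space M by (rule M)
  define V where "V i = eta (i + 2)" for i
  have three_point: "three_point_rv M p q r (Y k)" if "k \<ge> 1" for k
    using indep distr1[OF that] distrm1[OF that] distr0[OF that] pqr that
    unfolding three_point_rv_def indep_vars_def by auto
  have X1: "three_point_rv M p q r X1" using three_point[of 1] by (simp add: Y_def)
  have V: "three_point_rv M p q r (V i)" for i using three_point[of "i + 2"] by (simp add: Y_def V_def)
  have "case_nat X1 V = (\<lambda>i. Y (Suc i))" by (auto simp: fun_eq_iff Y_def V_def split: nat.split)
  then have indep': "indep_vars (\<lambda>_. borel) (case_nat X1 V) UNIV"
    using indep_vars_reindex[OF indep, of Suc UNIV] by auto
  have centred: "S (Suc m) \<omega> - real (Suc m) * (p - q) * X1 \<omega>
      = X1 \<omega> * ((\<Sum>i<m. V i \<omega> - (p - q)) + (1 - (p - q)))" for m \<omega>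
    unfolding S_def X_def V_def sum_first_step_memory by (simp add: sum_subtractf sum.distrib algebra_simps)
  have indV: "indep_vars (\<lambda>_. borel) V UNIV"
    using indep_vars_reindex[OF indep', of Suc UNIV] by simp
  show ?thesis
    unfolding weak_conv_def
  proof (intro conjI allI impI)
    fix x :: real
    show "(\<lambda>n. cdf (distr M borel (\<lambda>\<omega>. (S n \<omega> - real n * (p - q) * X1 \<omega>) /
        sqrt (real n * (p + q - (p - q)\<^sup>2)))) x)
      \<longlonglongrightarrow> (p + q) * cdf std_normal_distribution x + r * indicator {0..} x"
      by (rule LIMSEQ_imp_Suc, unfold centred) (rule first_step_memory_cdf_tendsto[OF indep' X1 V p(1) q(1)])
  next
    show "AE \<omega> in M. (\<lambda>n. (S n \<omega> - real n * (p - q) * X1 \<omega>) / real n) \<longlonglongrightarrow> 0"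
      using first_step_memory_AE_tendsto[OF indV V, where X=X1]
      by eventually_elim (rule LIMSEQ_imp_Suc, unfold centred)
  qed
qed

end
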